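(* Let $\gamma\ge1$ and let $\mathcal{C}\in\mathbb{C}^{2\times2\times\cdots\times2}$ be a tensor of order $2\gamma$ that is Hermitian and $\gamma$-semisymmetric. For $\theta,\phi\in\mathbb{R}$ let $x=(\cos\theta,\ \sin\theta\,e^{-\mathrm{i}\phi})^T$ and $y=(-\sin\theta\,e^{\mathrm{i}\phi},\ \cos\theta)^T$. Then there exist real symmetric matrices $M^{(\alpha,\beta)}\in\mathbb{R}^{3\times3}$, $1\le\alpha,\beta\le\gamma$, determined by $\mathcal{C}$, and real constants $c_x,c_y$ (independent of $\theta,\phi$) such that for all $\theta,\phi\in\mathbb{R}$ $$\mathcal{C}[x]=\sum_{\alpha=1}^{\gamma}\sum_{\beta=1}^{\gamma}z_{\alpha,\beta}^TM^{(\alpha,\beta)}z_{\alpha,\beta}+c_x,\qquad \mathcal{C}[y]=\sum_{\alpha=1}^{\gamma}\sum_{\beta=1}^{\gamma}(-1)^{\alpha}z_{\alpha,\beta}^TM^{(\alpha,\beta)}z_{\alpha,\beta}+c_y,$$ where $z_{\alpha,\beta}=z_{\alpha,\beta}(\theta,\phi)=(\cos\alpha\theta,\,-\sin\alpha\theta\cos\beta\phi,\,-\sin\alpha\theta\sin\beta\phi)^T$.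
   Context: For a vector $a\in\mathbb{C}^2$, $\mathcal{C}[a]=\sum_{i_1,\dots,i_{2\gamma}\in\{1,2\}}\mathcal{C}_{i_1\cdots i_{2\gamma}}\,\overline{a_{i_1}}\cdots\overline{a_{i_\gamma}}\,a_{i_{\gamma+1}}\cdots a_{i_{2\gamma}}$ (i.e. $\mathcal{C}$ contracted with $a^H$ in modes $1,\dots,\gamma$ and with $a^T$ in modes $\gamma+1,\dots,2\gamma$). $\mathcal{C}$ is Hermitian if $\mathcal{C}_{i_1\cdots i_\gamma i_{\gamma+1}\cdots i_{2\gamma}}=\overline{\mathcal{C}_{i_{\gamma+1}\cdots i_{2\gamma}i_1\cdots i_\gamma}}$ for all indices; it is $\gamma$-semisymmetric if its entries are invariant under any permutation of the first $\gamma$ indices and under any permutation of the last $\gamma$ indices. *)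

theory Defs
  imports "HOL-Analysis.Analysis"
begin

text \<open>An order-2g tensor over C^2 is modelled as a function on index lists;
  indices range over {1,2} as in the paper.\<close>

definition tensor_idx :: "nat \<Rightarrow> nat list set" where
  "tensor_idx g = {is. length is = 2 * g \<and> set is \<subseteq> {1, 2}}"

definition tensor_hermitian :: "nat \<Rightarrow> (nat list \<Rightarrow> complex) \<Rightarrow> bool" where
  "tensor_hermitian g C \<longleftrightarrow>
     (\<forall>is \<in> tensor_idx g. C is = cnj (C (drop g is @ take g is)))"

definition tensor_semisymmetric :: "nat \<Rightarrow> (nat list \<Rightarrow> complex) \<Rightarrow> bool" where
  "tensor_semisymmetric g C \<longleftrightarrow>
     (\<forall>is \<in> tensor_idx g. \<forall>p q. p permutes {..<g} \<and> q permutes {..<g} \<longrightarrow>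
        C (map (\<lambda>k. is ! p k) [0..<g] @ map (\<lambda>k. is ! (g + q k)) [0..<g]) = C is)"

text \<open>C[a]: contraction with conj(a) in the first g modes and a in the last g modes;
  a vector a in C^2 is given by its components a 1, a 2.\<close>
definition tensor_eval :: "nat \<Rightarrow> (nat list \<Rightarrow> complex) \<Rightarrow> (nat \<Rightarrow> complex) \<Rightarrow> complex" where
  "tensor_eval g C a =
     (\<Sum>is \<in> tensor_idx g. C is * (\<Prod>k<g. cnj (a (is ! k))) * (\<Prod>k<g. a (is ! (g + k))))"

definition xvec :: "real \<Rightarrow> real \<Rightarrow> nat \<Rightarrow> complex" where
  "xvec \<theta> \<phi> i = (if i = 1 then complex_of_real (cos \<theta>)
                   else complex_of_real (sin \<theta>) * cis (- \<phi>))"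

definition yvec :: "real \<Rightarrow> real \<Rightarrow> nat \<Rightarrow> complex" where
  "yvec \<theta> \<phi> i = (if i = 1 then - complex_of_real (sin \<theta>) * cis \<phi>
                   else complex_of_real (cos \<theta>))"

definition zvec :: "nat \<Rightarrow> nat \<Rightarrow> real \<Rightarrow> real \<Rightarrow> real ^ 3" where
  "zvec \<alpha> \<beta> \<theta> \<phi> = vector [cos (real \<alpha> * \<theta>),
                          - sin (real \<alpha> * \<theta>) * cos (real \<beta> * \<phi>),
                          - sin (real \<alpha> * \<theta>) * sin (real \<beta> * \<phi>)]"

end

theory Submission
  imports Defs
begin

(* Hermitian symmetry makes C[a] real, and y(theta, phi) = e^(i phi) x(theta + pi/2, phi), so
   C[y](theta, phi) = C[x](theta + pi/2, phi).  In the expansion of C[x], an index tuple with p twos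
   among the conjugated and q twos among the other slots contributes
   cos^(2g-p-q) theta sin^(p+q) theta Re(C e^(i(p-q) phi)).  This theta-factor is a trigonometric
   polynomial of degree g in 2 theta (in cosines if p + q is even, in sines if it is odd), and each of
   cos 2a theta, sin 2a theta (A cos b phi + B sin b phi) and sin^2 a theta (A cos 2b phi + B sin 2b phi)
   is, up to a constant, a quadratic form in z_(a,b) which the shift theta + pi/2 multiplies by (-1)^a.
   When the phi-frequency |p - q| is even and nonzero, the theta-factor vanishes at 0 and pi/2, which
   lets it be written in the basis sin^2 k theta. *)

section \<open>Trigonometric polynomials\<close>

definition lincomb :: "'i set \<Rightarrow> ('i \<Rightarrow> 'a \<Rightarrow> real) \<Rightarrow> ('a \<Rightarrow> real) \<Rightarrow> bool" where
  "lincomb K b F \<longleftrightarrow> (\<exists>u. \<forall>t. F t = (\<Sum>k\<in>K. u k * b k t))"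

abbreviation cos_poly :: "nat \<Rightarrow> (real \<Rightarrow> real) \<Rightarrow> bool" where
  "cos_poly n \<equiv> lincomb {..n} (\<lambda>k t. cos (2 * real k * t))"

abbreviation sin_poly :: "nat \<Rightarrow> (real \<Rightarrow> real) \<Rightarrow> bool" where
  "sin_poly n \<equiv> lincomb {..n} (\<lambda>k t. sin (2 * real k * t))"

lemma lincomb_cong: "lincomb K b F \<Longrightarrow> (\<And>t. G t = F t) \<Longrightarrow> lincomb K b G"
  by (metis ext)

lemma lincomb_add: "lincomb K b F \<Longrightarrow> lincomb K b G \<Longrightarrow> lincomb K b (\<lambda>t. F t + G t)"
  unfolding lincomb_def
  by (elim exE, rename_tac u v, rule_tac x = "\<lambda>k. u k + v k" in exI) (simp add: sum.distrib distrib_right)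

lemma lincomb_scale: "lincomb K b F \<Longrightarrow> lincomb K b (\<lambda>t. c * F t)"
  unfolding lincomb_def
  by (elim exE, rename_tac u, rule_tac x = "\<lambda>k. c * u k" in exI) (simp add: sum_distrib_left mult.assoc)

lemma lincomb_sum:
  assumes "finite A" "\<And>i. i \<in> A \<Longrightarrow> lincomb K b (F i)"
  shows "lincomb K b (\<lambda>t. \<Sum>i\<in>A. F i t)"
  using assms
proof (induction A rule: finite_induct)
  case empty
  show ?case unfolding lincomb_def by (intro exI[of _ "\<lambda>k. 0"]) simp
next
  case (insert i A)
  then show ?case using lincomb_add[of K b "F i"] by simp
qed

lemma lincomb_base:
  assumes "finite K" "k \<in> K"
  shows "lincomb K b (b k)"
proof -
  have "(\<Sum>j\<in>K. of_bool (j = k) * b j t) = b k t" for t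
    using assms by (simp add: Int_absorb1)
  then show ?thesis
    unfolding lincomb_def by metis
qed

lemma lincomb_mono:
  assumes "lincomb K b F" "finite K'" "K \<subseteq> K'"
  shows "lincomb K' b F"
proof -
  obtain u where u: "\<And>t. F t = (\<Sum>k\<in>K. u k * b k t)"
    using assms(1) unfolding lincomb_def by blast
  have "(\<Sum>k\<in>K'. (if k \<in> K then u k else 0) * b k t) = (\<Sum>k\<in>K. u k * b k t)" for t
    using assms(2,3) by (subst sum.mono_neutral_right[of K' K]) auto
  then show ?thesis
    unfolding lincomb_def using u by metis
qed

lemma lincomb_mult:
  assumes "lincomb K b F" "finite K" "\<And>k. k \<in> K \<Longrightarrow> lincomb K' b' (\<lambda>t. h t * b k t)"
  shows "lincomb K' b' (\<lambda>t. h t * F t)"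
proof -
  obtain u where u: "\<And>t. F t = (\<Sum>k\<in>K. u k * b k t)"
    using assms(1) unfolding lincomb_def by blast
  have "lincomb K' b' (\<lambda>t. \<Sum>k\<in>K. u k * (h t * b k t))"
    using assms(2,3) by (intro lincomb_sum lincomb_scale)
  then show ?thesis
    by (rule lincomb_cong) (simp add: u sum_distrib_left mult.left_commute)
qed

lemma cos_poly_mult_cos2: "cos_poly n F \<Longrightarrow> cos_poly (Suc n) (\<lambda>t. cos (2 * t) * F t)"
proof (erule lincomb_mult)
  fix k assume "k \<in> {..n}"
  show "cos_poly (Suc n) (\<lambda>t. cos (2 * t) * cos (2 * real k * t))"
  proof (cases k)
    case 0
    then show ?thesis using lincomb_base[of "{..Suc n}" 1 "\<lambda>k t. cos (2 * real k * t)"] by simp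
  next
    case (Suc m)
    have "cos (2 * t) * cos (2 * real k * t) = 1/2 * cos (2 * real m * t) + 1/2 * cos (2 * real (Suc (Suc m)) * t)" for t
      unfolding cos_times_cos Suc by (simp add: algebra_simps)
    moreover have "cos_poly (Suc n) (\<lambda>t. 1/2 * cos (2 * real m * t) + 1/2 * cos (2 * real (Suc (Suc m)) * t))"
      using Suc \<open>k \<in> {..n}\<close> by (intro lincomb_add lincomb_scale lincomb_base) auto
    ultimately show ?thesis
      by (rule_tac lincomb_cong) auto
  qed
qed simp

lemma sin_poly_mult_sin2: "cos_poly n F \<Longrightarrow> sin_poly (Suc n) (\<lambda>t. sin (2 * t) * F t)"
proof (erule lincomb_mult)
  fix k assume "k \<in> {..n}"
  show "sin_poly (Suc n) (\<lambda>t. sin (2 * t) * cos (2 * real k * t))"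
  proof (cases k)
    case 0
    then show ?thesis using lincomb_base[of "{..Suc n}" 1 "\<lambda>k t. sin (2 * real k * t)"] by simp
  next
    case (Suc m)
    have "sin (2 * t) * cos (2 * real k * t) = 1/2 * sin (2 * real (Suc (Suc m)) * t) + (- 1/2) * sin (2 * real m * t)" for t
      unfolding sin_times_cos Suc by (simp add: field_simps)
    moreover have "sin_poly (Suc n) (\<lambda>t. 1/2 * sin (2 * real (Suc (Suc m)) * t) + (- 1/2) * sin (2 * real m * t))"
      using Suc \<open>k \<in> {..n}\<close> by (intro lincomb_add lincomb_scale lincomb_base) auto
    ultimately show ?thesis
      by (rule_tac lincomb_cong) auto
  qed
qed simp

lemma cos_poly_mult_cos_sq:
  assumes F: "cos_poly n F"
  shows "cos_poly (Suc n) (\<lambda>t. cos t ^ 2 * F t)"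
proof -
  have "cos_poly (Suc n) (\<lambda>t. 1/2 * F t + 1/2 * (cos (2 * t) * F t))"
    using F by (intro lincomb_add lincomb_scale cos_poly_mult_cos2 lincomb_mono[OF F]) auto
  then show ?thesis
    by (rule lincomb_cong) (unfold cos_double_cos, simp add: algebra_simps)
qed

lemma cos_poly_mult_sin_sq:
  assumes F: "cos_poly n F"
  shows "cos_poly (Suc n) (\<lambda>t. sin t ^ 2 * F t)"
proof -
  have "cos_poly (Suc n) (\<lambda>t. 1/2 * F t + (- 1/2) * (cos (2 * t) * F t))"
    using F by (intro lincomb_add lincomb_scale cos_poly_mult_cos2 lincomb_mono[OF F]) auto
  then show ?thesis
    by (rule lincomb_cong) (unfold cos_double_sin, simp add: algebra_simps)
qed

lemma cos_poly_sin_even_pow: "cos_poly j (\<lambda>t. sin t ^ (2 * j))"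
proof (induction j)
  case 0
  then show ?case using lincomb_base[of "{..0}" 0 "\<lambda>k t. cos (2 * real k * t)"] by simp
next
  case (Suc j)
  show ?case
    by (rule lincomb_cong[OF cos_poly_mult_sin_sq[OF Suc.IH]]) (simp add: power2_eq_square)
qed

lemma cos_poly_cos_sin_even_pow: "cos_poly (i + j) (\<lambda>t. cos t ^ (2 * i) * sin t ^ (2 * j))"
proof (induction i)
  case 0
  then show ?case using cos_poly_sin_even_pow by simp
next
  case (Suc i)
  show ?case
    using lincomb_cong[OF cos_poly_mult_cos_sq[OF Suc.IH]] by (simp add: power2_eq_square)
qed

lemma sin_poly_cos_sin_odd_pow: "sin_poly (Suc (i + j)) (\<lambda>t. cos t ^ (2 * i + 1) * sin t ^ (2 * j + 1))"
proof -
  have "sin_poly (Suc (i + j)) (\<lambda>t. sin (2 * t) * (1/2 * (cos t ^ (2 * i) * sin t ^ (2 * j))))"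
    by (intro sin_poly_mult_sin2 lincomb_scale cos_poly_cos_sin_even_pow)
  then show ?thesis
    by (rule lincomb_cong) (unfold sin_double, simp add: power_add algebra_simps)
qed

definition cs_monomial :: "nat \<Rightarrow> nat \<Rightarrow> real \<Rightarrow> real" where
  "cs_monomial g m t = cos t ^ (2 * g - m) * sin t ^ m"

lemma cs_monomial_cos_poly:
  assumes "m \<le> 2 * g" "even m"
  shows "cos_poly g (cs_monomial g m)"
proof -
  obtain j where j: "m = 2 * j" using assms(2) by blast
  then have "2 * g - m = 2 * (g - j)" "g - j + j = g" using assms(1) by auto
  then show ?thesis
    using cos_poly_cos_sin_even_pow[of "g - j" j] unfolding cs_monomial_def j by simp
qed

lemma cs_monomial_sin_poly:
  assumes "m \<le> 2 * g" "odd m"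
  shows "sin_poly g (cs_monomial g m)"
proof -
  obtain j where j: "m = 2 * j + 1" using assms(2) oddE by blast
  then have "2 * g - m = 2 * (g - j - 1) + 1" "Suc (g - j - 1 + j) = g" using assms(1) by auto
  then show ?thesis
    using sin_poly_cos_sin_odd_pow[of "g - j - 1" j] unfolding cs_monomial_def j by simp
qed


section \<open>Quadratic forms in z\<close>

definition zform :: "(nat \<Rightarrow> real) \<Rightarrow> nat \<Rightarrow> (nat \<Rightarrow> nat \<Rightarrow> real^3^3) \<Rightarrow> real \<Rightarrow> real \<Rightarrow> real" where
  "zform w g M \<theta> \<phi> = (\<Sum>\<alpha> = 1..g. \<Sum>\<beta> = 1..g. w \<alpha> * (zvec \<alpha> \<beta> \<theta> \<phi> \<bullet> (M \<alpha> \<beta> *v zvec \<alpha> \<beta> \<theta> \<phi>)))"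

definition zform_repr :: "nat \<Rightarrow> (real \<Rightarrow> real \<Rightarrow> real) \<Rightarrow> (real \<Rightarrow> real \<Rightarrow> real) \<Rightarrow> bool" where
  "zform_repr g h k \<longleftrightarrow> (\<exists>M cx cy. (\<forall>\<alpha>\<in>{1..g}. \<forall>\<beta>\<in>{1..g}. transpose (M \<alpha> \<beta>) = M \<alpha> \<beta>) \<and>
     (\<forall>\<theta> \<phi>. h \<theta> \<phi> = zform (\<lambda>_. 1) g M \<theta> \<phi> + cx \<and> k \<theta> \<phi> = zform (\<lambda>\<alpha>. (-1) ^ \<alpha>) g M \<theta> \<phi> + cy))"

lemma zform_add: "zform w g (\<lambda>\<alpha> \<beta>. M \<alpha> \<beta> + N \<alpha> \<beta>) \<theta> \<phi> = zform w g M \<theta> \<phi> + zform w g N \<theta> \<phi>"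
  by (simp add: zform_def matrix_vector_mult_add_rdistrib inner_add_right distrib_left sum.distrib)

lemma zform_scale: "zform w g (\<lambda>\<alpha> \<beta>. c *\<^sub>R M \<alpha> \<beta>) \<theta> \<phi> = c * zform w g M \<theta> \<phi>"
  by (simp add: zform_def scaleR_matrix_vector_assoc[symmetric] sum_distrib_left mult.left_commute)

lemma zform_zero: "zform w g (\<lambda>\<alpha> \<beta>. 0) \<theta> \<phi> = 0"
  by (simp add: zform_def)

lemma zform_single:
  assumes "a \<in> {1..g}" "b \<in> {1..g}"
  shows "zform w g (\<lambda>\<alpha> \<beta>. if \<alpha> = a \<and> \<beta> = b then E else 0) \<theta> \<phi>
           = w a * (zvec a b \<theta> \<phi> \<bullet> (E *v zvec a b \<theta> \<phi>))"
proof -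
  have "w \<alpha> * (zvec \<alpha> \<beta> \<theta> \<phi> \<bullet> ((if \<alpha> = a \<and> \<beta> = b then E else 0) *v zvec \<alpha> \<beta> \<theta> \<phi>))
      = (if \<alpha> = a then if \<beta> = b then w a * (zvec a b \<theta> \<phi> \<bullet> (E *v zvec a b \<theta> \<phi>)) else 0 else 0)"
    for \<alpha> \<beta> by simp
  moreover have "(\<Sum>\<beta> = 1..g. if \<alpha> = a then if \<beta> = b then X else 0 else 0) = (if \<alpha> = a then X else 0)"
    for \<alpha> and X :: real using assms(2) by simp
  ultimately show ?thesis
    using assms(1) by (simp add: zform_def)
qed

lemma zform_repr_const: "zform_repr g (\<lambda>\<theta> \<phi>. c) (\<lambda>\<theta> \<phi>. c')"
  unfolding zform_repr_def
  by (rule exI[of _ "\<lambda>\<alpha> \<beta>. 0"]) (simp add: zform_zero transpose_def vec_eq_iff)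

lemma zform_repr_add:
  assumes "zform_repr g h k" "zform_repr g h' k'"
  shows "zform_repr g (\<lambda>\<theta> \<phi>. h \<theta> \<phi> + h' \<theta> \<phi>) (\<lambda>\<theta> \<phi>. k \<theta> \<phi> + k' \<theta> \<phi>)"
proof -
  obtain M cx cy where "\<forall>\<alpha>\<in>{1..g}. \<forall>\<beta>\<in>{1..g}. transpose (M \<alpha> \<beta>) = M \<alpha> \<beta>"
    "\<forall>\<theta> \<phi>. h \<theta> \<phi> = zform (\<lambda>_. 1) g M \<theta> \<phi> + cx \<and> k \<theta> \<phi> = zform (\<lambda>\<alpha>. (-1) ^ \<alpha>) g M \<theta> \<phi> + cy"
    using assms(1) unfolding zform_repr_def by blast
  moreover obtain N dx dy where "\<forall>\<alpha>\<in>{1..g}. \<forall>\<beta>\<in>{1..g}. transpose (N \<alpha> \<beta>) = N \<alpha> \<beta>"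
    "\<forall>\<theta> \<phi>. h' \<theta> \<phi> = zform (\<lambda>_. 1) g N \<theta> \<phi> + dx \<and> k' \<theta> \<phi> = zform (\<lambda>\<alpha>. (-1) ^ \<alpha>) g N \<theta> \<phi> + dy"
    using assms(2) unfolding zform_repr_def by blast
  ultimately show ?thesis
    unfolding zform_repr_def
    by (intro exI[of _ "\<lambda>\<alpha> \<beta>. M \<alpha> \<beta> + N \<alpha> \<beta>"] exI[of _ "cx + dx"] exI[of _ "cy + dy"])
       (simp add: zform_add transpose_def vec_eq_iff)
qed

lemma zform_repr_scale:
  assumes "zform_repr g h k"
  shows "zform_repr g (\<lambda>\<theta> \<phi>. c * h \<theta> \<phi>) (\<lambda>\<theta> \<phi>. c * k \<theta> \<phi>)"
proof -
  obtain M cx cy where "\<forall>\<alpha>\<in>{1..g}. \<forall>\<beta>\<in>{1..g}. transpose (M \<alpha> \<beta>) = M \<alpha> \<beta>"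
    "\<forall>\<theta> \<phi>. h \<theta> \<phi> = zform (\<lambda>_. 1) g M \<theta> \<phi> + cx \<and> k \<theta> \<phi> = zform (\<lambda>\<alpha>. (-1) ^ \<alpha>) g M \<theta> \<phi> + cy"
    using assms unfolding zform_repr_def by blast
  then show ?thesis
    unfolding zform_repr_def
    by (intro exI[of _ "\<lambda>\<alpha> \<beta>. c *\<^sub>R M \<alpha> \<beta>"] exI[of _ "c * cx"] exI[of _ "c * cy"])
       (simp add: zform_scale transpose_def vec_eq_iff distrib_left)
qed

lemma zform_repr_cong:
  "zform_repr g h k \<Longrightarrow> (\<And>\<theta> \<phi>. h' \<theta> \<phi> = h \<theta> \<phi>) \<Longrightarrow> (\<And>\<theta> \<phi>. k' \<theta> \<phi> = k \<theta> \<phi>) \<Longrightarrow> zform_repr g h' k'"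
  by (metis ext)

lemma zform_repr_sum:
  assumes "finite A" "\<And>i. i \<in> A \<Longrightarrow> zform_repr g (h i) (k i)"
  shows "zform_repr g (\<lambda>\<theta> \<phi>. \<Sum>i\<in>A. h i \<theta> \<phi>) (\<lambda>\<theta> \<phi>. \<Sum>i\<in>A. k i \<theta> \<phi>)"
  using assms
proof (induction A rule: finite_induct)
  case empty
  show ?case using zform_repr_const[of g 0 0] by simp
next
  case (insert i A)
  then show ?case using zform_repr_add[of g "h i" "k i"] by simp
qed

lemma zform_repr_single:
  assumes "a \<in> {1..g}" "b \<in> {1..g}" "transpose E = E"
  shows "zform_repr g (\<lambda>\<theta> \<phi>. zvec a b \<theta> \<phi> \<bullet> (E *v zvec a b \<theta> \<phi>) + c)
                      (\<lambda>\<theta> \<phi>. (-1) ^ a * (zvec a b \<theta> \<phi> \<bullet> (E *v zvec a b \<theta> \<phi>)) + c')"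
  unfolding zform_repr_def
  by (intro exI[of _ "\<lambda>\<alpha> \<beta>. if \<alpha> = a \<and> \<beta> = b then E else 0"] exI[of _ c] exI[of _ c'])
     (use assms in \<open>auto simp: zform_single transpose_def vec_eq_iff\<close>)

definition sym3 :: "real \<Rightarrow> real \<Rightarrow> real \<Rightarrow> real \<Rightarrow> real \<Rightarrow> real \<Rightarrow> real^3^3" where
  "sym3 d1 d2 d3 e12 e13 e23 =
     vector [vector [d1, e12, e13], vector [e12, d2, e23], vector [e13, e23, d3]]"

lemma transpose_sym3: "transpose (sym3 d1 d2 d3 e12 e13 e23) = sym3 d1 d2 d3 e12 e13 e23"
  by (simp add: sym3_def transpose_def vec_eq_iff forall_3)

lemma sym3_quadratic_form:
  "vector [x, y, z] \<bullet> (sym3 d1 d2 d3 e12 e13 e23 *v vector [x, y, z])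
     = d1 * x\<^sup>2 + d2 * y\<^sup>2 + d3 * z\<^sup>2 + 2 * e12 * x * y + 2 * e13 * x * z + 2 * e23 * y * z"
  by (simp add: sym3_def inner_vec_def matrix_vector_mult_def sum_3 power2_eq_square algebra_simps)

lemma zform_repr_cos:
  assumes "1 \<le> g" "a \<le> g"
  shows "zform_repr g (\<lambda>\<theta> \<phi>. cos (2 * real a * \<theta>)) (\<lambda>\<theta> \<phi>. (-1) ^ a * cos (2 * real a * \<theta>))"
proof (cases "a = 0")
  case True
  then show ?thesis using zform_repr_const[of g 1 1] by simp
next
  case False
  have double: "cos (2 * real a * \<theta>) = 2 * cos (real a * \<theta>) ^ 2 - 1" for \<theta>
    using cos_double_cos[of "real a * \<theta>"] by (simp add: mult.assoc)
  have "zform_repr g (\<lambda>\<theta> \<phi>. zvec a 1 \<theta> \<phi> \<bullet> (sym3 2 0 0 0 0 0 *v zvec a 1 \<theta> \<phi>) + (- 1))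
      (\<lambda>\<theta> \<phi>. (-1) ^ a * (zvec a 1 \<theta> \<phi> \<bullet> (sym3 2 0 0 0 0 0 *v zvec a 1 \<theta> \<phi>)) - (-1) ^ a)"
    using assms False zform_repr_single[of a g 1 "sym3 2 0 0 0 0 0" "- 1" "- ((-1) ^ a)"]
    by (simp add: transpose_sym3)
  then show ?thesis
    by (rule zform_repr_cong) (unfold double, simp_all add: zvec_def sym3_quadratic_form algebra_simps)
qed

lemma zform_repr_sin:
  assumes "a \<le> g" "b \<in> {1..g}"
  shows "zform_repr g (\<lambda>\<theta> \<phi>. sin (2 * real a * \<theta>) * (A * cos (real b * \<phi>) + B * sin (real b * \<phi>)))
      (\<lambda>\<theta> \<phi>. (-1) ^ a * (sin (2 * real a * \<theta>) * (A * cos (real b * \<phi>) + B * sin (real b * \<phi>))))"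
proof (cases "a = 0")
  case True
  then show ?thesis using zform_repr_const[of g 0 0] by simp
next
  case False
  have double: "sin (2 * real a * \<theta>) = 2 * sin (real a * \<theta>) * cos (real a * \<theta>)" for \<theta>
    using sin_double[of "real a * \<theta>"] by (simp add: mult.assoc)
  have "zform_repr g (\<lambda>\<theta> \<phi>. zvec a b \<theta> \<phi> \<bullet> (sym3 0 0 0 (- A) (- B) 0 *v zvec a b \<theta> \<phi>))
      (\<lambda>\<theta> \<phi>. (-1) ^ a * (zvec a b \<theta> \<phi> \<bullet> (sym3 0 0 0 (- A) (- B) 0 *v zvec a b \<theta> \<phi>)))"
    using assms False zform_repr_single[of a g b "sym3 0 0 0 (- A) (- B) 0" 0 0]
    by (simp add: transpose_sym3)
  then show ?thesis
    by (rule zform_repr_cong) (unfold double, simp_all add: zvec_def sym3_quadratic_form algebra_simps)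
qed

lemma zform_repr_sin_sq:
  assumes "a \<le> g" "b \<in> {1..g}"
  shows "zform_repr g (\<lambda>\<theta> \<phi>. sin (real a * \<theta>) ^ 2 * (A * cos (2 * real b * \<phi>) + B * sin (2 * real b * \<phi>)))
      (\<lambda>\<theta> \<phi>. (-1) ^ a * (sin (real a * \<theta>) ^ 2 * (A * cos (2 * real b * \<phi>) + B * sin (2 * real b * \<phi>))))"
proof (cases "a = 0")
  case True
  then show ?thesis using zform_repr_const[of g 0 0] by simp
next
  case False
  have double: "cos (2 * real b * \<phi>) = cos (real b * \<phi>) ^ 2 - sin (real b * \<phi>) ^ 2"
    "sin (2 * real b * \<phi>) = 2 * sin (real b * \<phi>) * cos (real b * \<phi>)" for \<phi>
    using cos_double[of "real b * \<phi>"] sin_double[of "real b * \<phi>"] by (simp_all add: mult.assoc)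
  have "zform_repr g (\<lambda>\<theta> \<phi>. zvec a b \<theta> \<phi> \<bullet> (sym3 0 A (- A) 0 0 B *v zvec a b \<theta> \<phi>))
      (\<lambda>\<theta> \<phi>. (-1) ^ a * (zvec a b \<theta> \<phi> \<bullet> (sym3 0 A (- A) 0 0 B *v zvec a b \<theta> \<phi>)))"
    using assms False zform_repr_single[of a g b "sym3 0 A (- A) 0 0 B" 0 0]
    by (simp add: transpose_sym3)
  then show ?thesis
    by (rule zform_repr_cong) (unfold double, simp_all add: zvec_def sym3_quadratic_form power2_eq_square algebra_simps)
qed

lemma cos_shift_pi_half: "cos (2 * real k * (t + pi/2)) = (-1) ^ k * cos (2 * real k * t)"
  by (simp add: distrib_left cos_add)

lemma sin_shift_pi_half: "sin (2 * real k * (t + pi/2)) = (-1) ^ k * sin (2 * real k * t)"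
  by (simp add: distrib_left sin_add)

lemma zform_repr_cos_poly:
  assumes "1 \<le> g" "cos_poly g F"
  shows "zform_repr g (\<lambda>\<theta> \<phi>. F \<theta>) (\<lambda>\<theta> \<phi>. F (\<theta> + pi/2))"
proof -
  obtain u where u: "\<And>\<theta>. F \<theta> = (\<Sum>k\<le>g. u k * cos (2 * real k * \<theta>))"
    using assms(2) unfolding lincomb_def by blast
  have "zform_repr g (\<lambda>\<theta> \<phi>. \<Sum>k\<le>g. u k * cos (2 * real k * \<theta>))
      (\<lambda>\<theta> \<phi>. \<Sum>k\<le>g. u k * ((-1) ^ k * cos (2 * real k * \<theta>)))"
    using assms(1) by (intro zform_repr_sum zform_repr_scale zform_repr_cos) auto
  then show ?thesis
    by (rule zform_repr_cong) (simp_all add: u cos_shift_pi_half)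
qed

lemma zform_repr_sin_poly:
  assumes "b \<in> {1..g}" "sin_poly g F"
  shows "zform_repr g (\<lambda>\<theta> \<phi>. F \<theta> * (A * cos (real b * \<phi>) + B * sin (real b * \<phi>)))
      (\<lambda>\<theta> \<phi>. F (\<theta> + pi/2) * (A * cos (real b * \<phi>) + B * sin (real b * \<phi>)))"
proof -
  obtain u where u: "\<And>\<theta>. F \<theta> = (\<Sum>k\<le>g. u k * sin (2 * real k * \<theta>))"
    using assms(2) unfolding lincomb_def by blast
  have "zform_repr g
      (\<lambda>\<theta> \<phi>. \<Sum>k\<le>g. u k * (sin (2 * real k * \<theta>) * (A * cos (real b * \<phi>) + B * sin (real b * \<phi>))))
      (\<lambda>\<theta> \<phi>. \<Sum>k\<le>g. u k * ((-1) ^ k * (sin (2 * real k * \<theta>) * (A * cos (real b * \<phi>) + B * sin (real b * \<phi>)))))"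
    using assms(1) by (intro zform_repr_sum zform_repr_scale zform_repr_sin) auto
  then show ?thesis
    by (rule zform_repr_cong) (unfold u sin_shift_pi_half sum_distrib_right, simp_all add: mult.assoc)
qed

lemma zform_repr_cos_poly_vanishing:
  assumes "b \<in> {1..g}" "cos_poly g F" "F 0 = 0" "F (pi/2) = 0"
  shows "zform_repr g (\<lambda>\<theta> \<phi>. F \<theta> * (A * cos (2 * real b * \<phi>) + B * sin (2 * real b * \<phi>)))
      (\<lambda>\<theta> \<phi>. F (\<theta> + pi/2) * (A * cos (2 * real b * \<phi>) + B * sin (2 * real b * \<phi>)))"
proof -
  obtain u where u: "\<And>\<theta>. F \<theta> = (\<Sum>k\<le>g. u k * cos (2 * real k * \<theta>))"
    using assms(2) unfolding lincomb_def by blast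
  \<comment> \<open>The offsets cx, cy cannot absorb constant multiples of the \<phi>-factor, so F is rewritten in
    the basis sin^2 (k\<theta>), which has no constant term; this uses F 0 = F (pi/2) = 0.\<close>
  have cos_minus_1: "u k * (cos (2 * real k * \<theta>) - 1) = - 2 * u k * sin (real k * \<theta>) ^ 2" for k \<theta>
    using cos_double_sin[of "real k * \<theta>"] by (simp add: mult.assoc)
  have u_shift: "F (\<theta> + pi/2) = (\<Sum>k\<le>g. (-1) ^ k * (u k * cos (2 * real k * \<theta>)))" for \<theta>
    unfolding u cos_shift_pi_half by (simp add: mult.left_commute)
  have F: "F \<theta> = F 0 + (\<Sum>k\<le>g. - 2 * u k * sin (real k * \<theta>) ^ 2)" for \<theta>
  proof -
    have "F \<theta> - F 0 = (\<Sum>k\<le>g. u k * (cos (2 * real k * \<theta>) - 1))"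
      by (simp add: u sum_subtractf right_diff_distrib)
    then show ?thesis
      unfolding cos_minus_1 by linarith
  qed
  have F_shift: "F (\<theta> + pi/2) = F (pi/2) + (\<Sum>k\<le>g. (-1) ^ k * (- 2 * u k * sin (real k * \<theta>) ^ 2))" for \<theta>
  proof -
    have "F (\<theta> + pi/2) - F (pi/2) = (\<Sum>k\<le>g. (-1) ^ k * (u k * (cos (2 * real k * \<theta>) - 1)))"
      using u_shift[of \<theta>] u_shift[of 0] by (simp add: sum_subtractf right_diff_distrib)
    then show ?thesis
      unfolding cos_minus_1 by linarith
  qed
  have "zform_repr g
      (\<lambda>\<theta> \<phi>. \<Sum>k\<le>g. - 2 * u k * (sin (real k * \<theta>) ^ 2 * (A * cos (2 * real b * \<phi>) + B * sin (2 * real b * \<phi>))))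
      (\<lambda>\<theta> \<phi>. \<Sum>k\<le>g. - 2 * u k * ((-1) ^ k * (sin (real k * \<theta>) ^ 2 * (A * cos (2 * real b * \<phi>) + B * sin (2 * real b * \<phi>)))))"
    using assms(1) by (intro zform_repr_sum zform_repr_scale zform_repr_sin_sq) auto
  then show ?thesis
  proof (rule zform_repr_cong)
    show "F \<theta> * (A * cos (2 * real b * \<phi>) + B * sin (2 * real b * \<phi>)) = (\<Sum>k\<le>g. - 2 * u k * (sin (real k * \<theta>) ^ 2 * (A * cos (2 * real b * \<phi>) + B * sin (2 * real b * \<phi>))))" for \<theta> \<phi>
      by (subst F) (simp add: assms(3) sum_distrib_right mult.assoc)
    show "F (\<theta> + pi/2) * (A * cos (2 * real b * \<phi>) + B * sin (2 * real b * \<phi>)) = (\<Sum>k\<le>g. - 2 * u k * ((-1) ^ k * (sin (real k * \<theta>) ^ 2 * (A * cos (2 * real b * \<phi>) + B * sin (2 * real b * \<phi>)))))" for \<theta> \<phi>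
      unfolding F_shift assms(4) add_0 sum_distrib_right by (simp add: mult_ac)
  qed
qed

lemma zform_repr_cs_term_le:
  assumes "1 \<le> g" "q \<le> p" "p \<le> g"
  shows "zform_repr g
      (\<lambda>\<theta> \<phi>. cs_monomial g (p + q) \<theta> * (A * cos (real (p - q) * \<phi>) + B * sin (real (p - q) * \<phi>)))
      (\<lambda>\<theta> \<phi>. cs_monomial g (p + q) (\<theta> + pi/2) * (A * cos (real (p - q) * \<phi>) + B * sin (real (p - q) * \<phi>)))"
proof -
  have "p + q = (p - q) + 2 * q" "p + q \<le> 2 * g"
    using assms by auto
  then have parity: "even (p + q) \<longleftrightarrow> even (p - q)"
    by simp
  consider "p = q" | "odd (p - q)" | "p \<noteq> q" "even (p - q)"
    by blast
  then show ?thesis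
  proof cases
    case 1
    then have "cos_poly g (cs_monomial g (p + q))"
      using assms by (intro cs_monomial_cos_poly) auto
    then have "zform_repr g (\<lambda>\<theta> \<phi>. A * cs_monomial g (p + q) \<theta>) (\<lambda>\<theta> \<phi>. A * cs_monomial g (p + q) (\<theta> + pi/2))"
      using assms(1) by (intro zform_repr_scale zform_repr_cos_poly)
    then show ?thesis
      by (rule zform_repr_cong) (simp_all add: 1)
  next
    case 2
    have "p - q \<in> {1..g}"
      using odd_pos[OF 2] assms by auto
    moreover have "sin_poly g (cs_monomial g (p + q))"
      using assms parity 2 by (intro cs_monomial_sin_poly) auto
    ultimately show ?thesis
      by (rule zform_repr_sin_poly)
  next
    case 3
    then obtain b where b: "p - q = 2 * b"
      by blast
    have "b \<in> {1..g}"
      using assms 3 b by auto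
    moreover have "cos_poly g (cs_monomial g (p + q))"
      using assms parity 3 by (intro cs_monomial_cos_poly) auto
    moreover have "0 < p + q" "0 < 2 * g - (p + q)"
      using assms 3 by auto
    then have "cs_monomial g (p + q) 0 = 0" "cs_monomial g (p + q) (pi/2) = 0"
      by (simp_all add: cs_monomial_def)
    ultimately have "zform_repr g
        (\<lambda>\<theta> \<phi>. cs_monomial g (p + q) \<theta> * (A * cos (2 * real b * \<phi>) + B * sin (2 * real b * \<phi>)))
        (\<lambda>\<theta> \<phi>. cs_monomial g (p + q) (\<theta> + pi/2) * (A * cos (2 * real b * \<phi>) + B * sin (2 * real b * \<phi>)))"
      by (rule zform_repr_cos_poly_vanishing)
    then show ?thesis
      unfolding b of_nat_mult of_nat_numeral .
  qed
qed

lemma zform_repr_cs_term: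
  assumes "1 \<le> g" "p \<le> g" "q \<le> g"
  shows "zform_repr g
      (\<lambda>\<theta> \<phi>. cs_monomial g (p + q) \<theta> * (A * cos ((real p - real q) * \<phi>) + B * sin ((real p - real q) * \<phi>)))
      (\<lambda>\<theta> \<phi>. cs_monomial g (p + q) (\<theta> + pi/2) * (A * cos ((real p - real q) * \<phi>) + B * sin ((real p - real q) * \<phi>)))"
proof (cases "q \<le> p")
  case True
  then show ?thesis
    using zform_repr_cs_term_le[of g q p A B] assms by (simp add: of_nat_diff)
next
  case False
  then have "(real p - real q) * \<phi> = - (real (q - p) * \<phi>)" for \<phi>
    by (simp add: of_nat_diff algebra_simps)
  moreover have "zform_repr g
      (\<lambda>\<theta> \<phi>. cs_monomial g (q + p) \<theta> * (A * cos (real (q - p) * \<phi>) + (- B) * sin (real (q - p) * \<phi>)))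
      (\<lambda>\<theta> \<phi>. cs_monomial g (q + p) (\<theta> + pi/2) * (A * cos (real (q - p) * \<phi>) + (- B) * sin (real (q - p) * \<phi>)))"
    using False assms by (intro zform_repr_cs_term_le) auto
  ultimately show ?thesis
    by (simp add: add.commute)
qed

section \<open>The contraction C[x]\<close>

lemma finite_tensor_idx: "finite (tensor_idx g)"
proof -
  have "tensor_idx g = {xs. set xs \<subseteq> {1, 2} \<and> length xs = 2 * g}"
    unfolding tensor_idx_def by auto
  then show ?thesis
    using finite_lists_length_eq[of "{1::nat, 2}" "2 * g"] by simp
qed

lemma rotate_tensor_idx:
  assumes "xs \<in> tensor_idx g"
  shows "rotate g xs \<in> tensor_idx g" "rotate g (rotate g xs) = xs"
    and "drop g xs @ take g xs = rotate g xs"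
    and "k < g \<Longrightarrow> rotate g xs ! k = xs ! (g + k)"
    and "k < g \<Longrightarrow> rotate g xs ! (g + k) = xs ! k"
proof -
  have len: "length xs = 2 * g"
    using assms by (simp add: tensor_idx_def)
  then show "rotate g xs \<in> tensor_idx g"
    using assms by (simp add: tensor_idx_def)
  show "rotate g (rotate g xs) = xs"
    using len by (simp add: rotate_rotate flip: mult_2)
  show "drop g xs @ take g xs = rotate g xs"
    using len by (cases "g = 0") (simp_all add: rotate_drop_take)
  show "k < g \<Longrightarrow> rotate g xs ! k = xs ! (g + k)"
    using len by (simp add: nth_rotate)
  show "k < g \<Longrightarrow> rotate g xs ! (g + k) = xs ! k"
    using len by (simp add: nth_rotate mult_2 add.assoc[symmetric])
qed

lemma tensor_eval_real:
  assumes "tensor_hermitian g C"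
  shows "tensor_eval g C a \<in> \<real>"
proof -
  define summand where "summand xs = C xs * (\<Prod>k<g. cnj (a (xs ! k))) * (\<Prod>k<g. a (xs ! (g + k)))" for xs
  have "cnj (tensor_eval g C a) = (\<Sum>xs\<in>tensor_idx g. cnj (summand xs))"
    unfolding tensor_eval_def summand_def by simp
  also have "\<dots> = (\<Sum>xs\<in>tensor_idx g. summand xs)"
  proof (rule sum.reindex_bij_witness[of _ "rotate g" "rotate g"])
    fix xs assume xs: "xs \<in> tensor_idx g"
    show "rotate g (rotate g xs) = xs" "rotate g xs \<in> tensor_idx g"
      using rotate_tensor_idx[OF xs] by auto
    have "C (rotate g xs) = cnj (C xs)"
      using assms xs rotate_tensor_idx(3)[OF xs] unfolding tensor_hermitian_def
      by (metis complex_cnj_cnj rotate_tensor_idx(1,2)[OF xs])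
    then show "summand (rotate g xs) = cnj (summand xs)"
      unfolding summand_def using rotate_tensor_idx(4,5)[OF xs] by (simp add: mult_ac)
  qed (simp_all add: rotate_tensor_idx)
  also have "\<dots> = tensor_eval g C a"
    unfolding tensor_eval_def summand_def ..
  finally show ?thesis
    by (simp add: Reals_cnj_iff)
qed

lemma tensor_eval_scale:
  "tensor_eval g C (\<lambda>i. c * a i) = complex_of_real (cmod c ^ (2 * g)) * tensor_eval g C a"
proof -
  have "cnj c ^ g * c ^ g = (c * cnj c) ^ g"
    by (simp add: power_mult_distrib mult.commute)
  also have "\<dots> = complex_of_real (cmod c ^ (2 * g))"
    by (simp add: complex_norm_square[symmetric] power_mult flip: of_real_power)
  finally have "cnj c ^ g * c ^ g = complex_of_real (cmod c ^ (2 * g))" .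
  then show ?thesis
    unfolding tensor_eval_def sum_distrib_left
    by (intro sum.cong refl) (simp add: prod.distrib mult_ac)
qed

lemma yvec_eq_xvec_shift: "yvec \<theta> \<phi> = (\<lambda>i. cis \<phi> * xvec (\<theta> + pi/2) \<phi> i)"
  by (auto simp: yvec_def xvec_def cos_add sin_add cis_mult)

lemma tensor_eval_yvec: "tensor_eval g C (yvec \<theta> \<phi>) = tensor_eval g C (xvec (\<theta> + pi/2) \<phi>)"
  unfolding yvec_eq_xvec_shift tensor_eval_scale by simp

definition count_twos :: "nat \<Rightarrow> (nat \<Rightarrow> nat) \<Rightarrow> nat" where
  "count_twos g i = card {k \<in> {..<g}. i k = 2}"

lemma count_twos_le: "count_twos g i \<le> g"
  unfolding count_twos_def by (rule order.trans[OF card_mono[of "{..<g}"]]) auto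

lemma prod_two_valued:
  assumes "\<And>k. k < g \<Longrightarrow> i k \<in> {1, 2}"
  shows "(\<Prod>k<g. h (i k)) = h 1 ^ (g - count_twos g i) * h 2 ^ count_twos g i"
proof -
  have "(\<Prod>k<g. h (i k)) = (\<Prod>k<g. if i k = 2 then h 2 else h 1)"
  proof (intro prod.cong refl)
    fix k assume "k \<in> {..<g}"
    then have "i k = 1 \<or> i k = 2"
      using assms by auto
    then show "h (i k) = (if i k = 2 then h 2 else h 1)"
      by auto
  qed
  also have "\<dots> = h 2 ^ card ({..<g} \<inter> {k. i k = 2}) * h 1 ^ card ({..<g} \<inter> - {k. i k = 2})"
    by (subst prod.If_cases) simp_all
  also have "{..<g} \<inter> {k. i k = 2} = {k \<in> {..<g}. i k = 2}"
    by auto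
  also have "card ({..<g} \<inter> - {k. i k = 2}) = g - count_twos g i"
  proof -
    have "{..<g} \<inter> - {k. i k = 2} = {..<g} - {k \<in> {..<g}. i k = 2}"
      by auto
    moreover have "card ({..<g} - {k \<in> {..<g}. i k = 2}) = card {..<g} - card {k \<in> {..<g}. i k = 2}"
      by (rule card_Diff_subset) auto
    ultimately show ?thesis
      unfolding count_twos_def by simp
  qed
  finally show ?thesis
    by (simp add: count_twos_def mult.commute)
qed

lemma xvec_monomial:
  assumes "\<And>k. k < g \<Longrightarrow> i k \<in> {1, 2}" "\<And>k. k < g \<Longrightarrow> j k \<in> {1, 2}"
  shows "(\<Prod>k<g. cnj (xvec \<theta> \<phi> (i k))) * (\<Prod>k<g. xvec \<theta> \<phi> (j k))
      = complex_of_real (cs_monomial g (count_twos g i + count_twos g j) \<theta>)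
        * cis ((real (count_twos g i) - real (count_twos g j)) * \<phi>)"
proof -
  define p q where "p = count_twos g i" and "q = count_twos g j"
  have "p \<le> g" "q \<le> g"
    unfolding p_def q_def by (simp_all add: count_twos_le)
  then have cos_pow: "cos \<theta> ^ (g - p) * cos \<theta> ^ (g - q) = cos \<theta> ^ (2 * g - (p + q))"
    by (simp add: power_add[symmetric] mult_2)
  have "cis \<phi> ^ p * cis (- \<phi>) ^ q = cis (real p * \<phi> + real q * (- \<phi>))"
    by (simp only: Complex.DeMoivre cis_mult)
  then have cis_pow: "cis \<phi> ^ p * cis (- \<phi>) ^ q = cis ((real p - real q) * \<phi>)"
    by (simp add: algebra_simps)
  have "(\<Prod>k<g. cnj (xvec \<theta> \<phi> (i k))) * (\<Prod>k<g. xvec \<theta> \<phi> (j k))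
      = (cnj (xvec \<theta> \<phi> 1) ^ (g - p) * cnj (xvec \<theta> \<phi> 2) ^ p) * (xvec \<theta> \<phi> 1 ^ (g - q) * xvec \<theta> \<phi> 2 ^ q)"
    unfolding p_def q_def
    by (simp only: prod_two_valued[where h = "\<lambda>n. cnj (xvec \<theta> \<phi> n)", OF assms(1)]
        prod_two_valued[where h = "xvec \<theta> \<phi>", OF assms(2)])
  also have "\<dots> = complex_of_real (cos \<theta> ^ (g - p) * cos \<theta> ^ (g - q) * sin \<theta> ^ (p + q))
      * (cis \<phi> ^ p * cis (- \<phi>) ^ q)"
    by (simp add: xvec_def cis_cnj power_mult_distrib power_add mult_ac)
  finally show ?thesis
    unfolding cs_monomial_def p_def[symmetric] q_def[symmetric] cos_pow cis_pow .
qed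

definition eval_term :: "nat \<Rightarrow> (nat list \<Rightarrow> complex) \<Rightarrow> nat list \<Rightarrow> real \<Rightarrow> real \<Rightarrow> real" where
  "eval_term g C xs \<theta> \<phi> =
     (let p = count_twos g (\<lambda>k. xs ! k); q = count_twos g (\<lambda>k. xs ! (g + k))
      in cs_monomial g (p + q) \<theta> *
           (Re (C xs) * cos ((real p - real q) * \<phi>) + (- Im (C xs)) * sin ((real p - real q) * \<phi>)))"

lemma zform_repr_eval_term:
  assumes "1 \<le> g"
  shows "zform_repr g (eval_term g C xs) (\<lambda>\<theta> \<phi>. eval_term g C xs (\<theta> + pi/2) \<phi>)"
  unfolding eval_term_def Let_def using assms by (intro zform_repr_cs_term count_twos_le)

lemma tensor_eval_xvec:
  assumes "tensor_hermitian g C"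
  shows "tensor_eval g C (xvec \<theta> \<phi>) = complex_of_real (\<Sum>xs\<in>tensor_idx g. eval_term g C xs \<theta> \<phi>)"
proof -
  have "Re (C xs * (\<Prod>k<g. cnj (xvec \<theta> \<phi> (xs ! k))) * (\<Prod>k<g. xvec \<theta> \<phi> (xs ! (g + k))))
      = eval_term g C xs \<theta> \<phi>" if "xs \<in> tensor_idx g" for xs
  proof -
    have "xs ! k \<in> {1, 2}" "xs ! (g + k) \<in> {1, 2}" if "k < g" for k
      using \<open>xs \<in> tensor_idx g\<close> that nth_mem[of _ xs] by (force simp: tensor_idx_def)+
    then have "(\<Prod>k<g. cnj (xvec \<theta> \<phi> (xs ! k))) * (\<Prod>k<g. xvec \<theta> \<phi> (xs ! (g + k)))
        = complex_of_real (cs_monomial g (count_twos g (\<lambda>k. xs ! k) + count_twos g (\<lambda>k. xs ! (g + k))) \<theta>)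
          * cis ((real (count_twos g (\<lambda>k. xs ! k)) - real (count_twos g (\<lambda>k. xs ! (g + k)))) * \<phi>)"
      by (rule xvec_monomial)
    then show ?thesis
      unfolding mult.assoc eval_term_def Let_def by (simp add: algebra_simps)
  qed
  then have "Re (tensor_eval g C (xvec \<theta> \<phi>)) = (\<Sum>xs\<in>tensor_idx g. eval_term g C xs \<theta> \<phi>)"
    unfolding tensor_eval_def Re_sum by (rule sum.cong[OF refl])
  then show ?thesis
    using tensor_eval_real[OF assms] of_real_Re by metis
qed

theorem proposition3p1:
  fixes g :: nat and C :: "nat list \<Rightarrow> complex"
  assumes "g \<ge> 1"
    and "tensor_hermitian g C"
    and "tensor_semisymmetric g C"
  shows "\<exists>(M :: nat \<Rightarrow> nat \<Rightarrow> real ^ 3 ^ 3) (cx :: real) (cy :: real).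
           (\<forall>\<alpha> \<in> {1..g}. \<forall>\<beta> \<in> {1..g}. transpose (M \<alpha> \<beta>) = M \<alpha> \<beta>) \<and>
           (\<forall>\<theta> \<phi> :: real.
              tensor_eval g C (xvec \<theta> \<phi>) =
                complex_of_real ((\<Sum>\<alpha> = 1..g. \<Sum>\<beta> = 1..g.
                   zvec \<alpha> \<beta> \<theta> \<phi> \<bullet> (M \<alpha> \<beta> *v zvec \<alpha> \<beta> \<theta> \<phi>)) + cx) \<and>
              tensor_eval g C (yvec \<theta> \<phi>) =
                complex_of_real ((\<Sum>\<alpha> = 1..g. \<Sum>\<beta> = 1..g.
                   (-1) ^ \<alpha> * (zvec \<alpha> \<beta> \<theta> \<phi> \<bullet> (M \<alpha> \<beta> *v zvec \<alpha> \<beta> \<theta> \<phi>))) + cy))"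
proof -
  have "zform_repr g (\<lambda>\<theta> \<phi>. \<Sum>xs\<in>tensor_idx g. eval_term g C xs \<theta> \<phi>)
      (\<lambda>\<theta> \<phi>. \<Sum>xs\<in>tensor_idx g. eval_term g C xs (\<theta> + pi/2) \<phi>)"
    using assms(1) by (intro zform_repr_sum finite_tensor_idx zform_repr_eval_term)
  then obtain M cx cy where sym: "\<forall>\<alpha>\<in>{1..g}. \<forall>\<beta>\<in>{1..g}. transpose (M \<alpha> \<beta>) = M \<alpha> \<beta>"
    and x: "\<And>\<theta> \<phi>. (\<Sum>xs\<in>tensor_idx g. eval_term g C xs \<theta> \<phi>) = zform (\<lambda>_. 1) g M \<theta> \<phi> + cx"
    and y: "\<And>\<theta> \<phi>. (\<Sum>xs\<in>tensor_idx g. eval_term g C xs (\<theta> + pi/2) \<phi>) = zform (\<lambda>\<alpha>. (-1) ^ \<alpha>) g M \<theta> \<phi> + cy"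
    unfolding zform_repr_def by blast
  have "tensor_eval g C (xvec \<theta> \<phi>) = complex_of_real (zform (\<lambda>_. 1) g M \<theta> \<phi> + cx)" for \<theta> \<phi>
    unfolding tensor_eval_xvec[OF assms(2)] x ..
  moreover have "tensor_eval g C (yvec \<theta> \<phi>) = complex_of_real (zform (\<lambda>\<alpha>. (-1) ^ \<alpha>) g M \<theta> \<phi> + cy)" for \<theta> \<phi>
    unfolding tensor_eval_yvec tensor_eval_xvec[OF assms(2)] y ..
  ultimately show ?thesis
    using sym by (intro exI[of _ M] exI[of _ cx] exI[of _ cy]) (simp add: zform_def)
qed

end
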